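(* Let $m,u\in\mathbb{Q}$ with $m>0$, $u>0$, $mu<1$, and put $n=m(m^2+1)\bigl(2u-m(u^2-1)\bigr)$. Define $$Q_{m,u}(t)=4m\,(mu^2-m-2u)\,(mt^2-2t-m)\Bigl[(mu^2-m-2u)t^2+(-4mu-2u^2+2)t-mu^2+m+2u\Bigr].$$ (i) Sending a triangle to the rational angle parameter $t$ of its angle $\alpha$ gives a bijection between hyperbolic Heron triangles (up to congruence respecting the labelling of vertices) whose area has rational parameter $m$ and whose angle $\beta$ has rational parameter $u$, and the rational numbers $t$ with $$0<t<\frac{1-mu}{m+u}\qquad\text{(condition (A))}$$ for which $Q_{m,u}(t)=w^2$ for some rational $w>0$. Here $w=(m^2+1)(u^2+1)(t^2+1)\,\sinh(a)\sin(\beta)\sin(\gamma)$. (ii) The affine curve $w^2=Q_{m,u}(t)$ is birational over $\mathbb{Q}$ to the elliptic curve $$E_{m,u}:\ y^2=x\,(x-n)\,\bigl(x-n(u^2+1)\bigr),$$ via a birational map under which $$x=\frac{2u-m(u^2-1)}{4t^2}\Bigl[-4(mu-1)(m+u)mt+2(m^2u^2+m^2-2mu+2)mt^2+2\bigl(2u-m(u^2-1)\bigr)m^2+mw\Bigr],$$ $$t=-\frac{m\bigl(2u-m(u^2-1)\bigr)\bigl(x-(m+u)^2(m^2+1)\bigr)}{y+(m+u)(1-mu)(x-n)}.$$ Consequently these hyperbolic Heron triangles are in one-to-one correspondence with the rational points $(x,y)$ of $E_{m,u}$ off the line $y+(m+u)(1-mu)(x-n)=0$ that satisfy condition (A) for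 the value of $t$ above (together with the sign condition corresponding to $w>0$), with at most one further explicit point of $E_{m,u}$, namely $P=\bigl((m^2+1)(m+u)^2,\;u^2(m^2+1)^2(m+u)(mu-1)\bigr)$, possibly arising from the line.
   Context: All triangles are non-degenerate, bounded triangles in the hyperbolic plane (curvature $-1$), with side lengths $a,b,c>0$, opposite angles $\alpha,\beta,\gamma>0$, and area $A=\pi-\alpha-\beta-\gamma$. A length $x$ is called rational if $e^x\in\mathbb{Q}$; an angle or area $x$ is called rational if $e^{ix}\in\mathbb{Q}[i]$, i.e. $\cos x,\sin x\in\mathbb{Q}$. A hyperbolic Heron triangle is one with $e^a,e^b,e^c\in\mathbb{Q}$ and $e^{i\alpha},e^{i\beta},e^{i\gamma},e^{iA}\in\mathbb{Q}[i]$. For a rational angle or area $x\in(0,\pi)$, its rational parameter is the unique $t\in\mathbb{Q}$, $t>0$, with $\cos x=\frac{1-t^2}{1+t^2}$ and $\sin x=\frac{2t}{1+t^2}$ (i.e. $t=\tan(x/2)$); "rational area $m$" means the area has rational parameter $m$, and "rational angle $u$" means the angle has rational parameter $u$. *)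

theory Defs
  imports "HOL-Analysis.Analysis"
begin

section \<open>Hyperbolic triangles (up to labelled congruence = side-length triples)\<close>

definition hyp_triangle :: "real \<Rightarrow> real \<Rightarrow> real \<Rightarrow> bool" where
  "hyp_triangle a b c \<longleftrightarrow> a > 0 \<and> b > 0 \<and> c > 0 \<and> a < b + c \<and> b < a + c \<and> c < a + b"

text \<open>Angle opposite side a (hyperbolic law of cosines, curvature -1).\<close>
definition hangle :: "real \<Rightarrow> real \<Rightarrow> real \<Rightarrow> real" where
  "hangle a b c = arccos ((cosh b * cosh c - cosh a) / (sinh b * sinh c))"

definition halpha :: "real \<Rightarrow> real \<Rightarrow> real \<Rightarrow> real" where "halpha a b c = hangle a b c"
definition hbeta  :: "real \<Rightarrow> real \<Rightarrow> real \<Rightarrow> real" where "hbeta a b c = hangle b c a"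
definition hgamma :: "real \<Rightarrow> real \<Rightarrow> real \<Rightarrow> real" where "hgamma a b c = hangle c a b"
definition harea :: "real \<Rightarrow> real \<Rightarrow> real \<Rightarrow> real" where
  "harea a b c = pi - halpha a b c - hbeta a b c - hgamma a b c"

definition rat_length :: "real \<Rightarrow> bool" where "rat_length x \<longleftrightarrow> exp x \<in> \<rat>"
definition rat_angle :: "real \<Rightarrow> bool" where "rat_angle x \<longleftrightarrow> cos x \<in> \<rat> \<and> sin x \<in> \<rat>"

definition heron :: "real \<Rightarrow> real \<Rightarrow> real \<Rightarrow> bool" where
  "heron a b c \<longleftrightarrow> hyp_triangle a b c \<and> rat_length a \<and> rat_length b \<and> rat_length c \<and>
     rat_angle (halpha a b c) \<and> rat_angle (hbeta a b c) \<and> rat_angle (hgamma a b c) \<and>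
     rat_angle (harea a b c)"

text \<open>x has rational parameter t (t = tan(x/2)).\<close>
definition has_rat_param :: "real \<Rightarrow> real \<Rightarrow> bool" where
  "has_rat_param x t \<longleftrightarrow> t \<in> \<rat> \<and> t > 0 \<and> cos x = (1 - t^2) / (1 + t^2) \<and> sin x = 2 * t / (1 + t^2)"

definition heron_mu :: "real \<Rightarrow> real \<Rightarrow> (real \<times> real \<times> real) set" where
  "heron_mu m u = {(a, b, c). heron a b c \<and> has_rat_param (harea a b c) m \<and> has_rat_param (hbeta a b c) u}"

definition kval :: "'a::field \<Rightarrow> 'a \<Rightarrow> 'a" where "kval m u = 2*u - m*(u^2 - 1)"
definition nval :: "'a::field \<Rightarrow> 'a \<Rightarrow> 'a" where "nval m u = m*(m^2+1)*kval m u"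
definition X0 :: "'a::field \<Rightarrow> 'a \<Rightarrow> 'a" where "X0 m u = (m+u)^2*(m^2+1)"
definition Lval :: "'a::field \<Rightarrow> 'a \<Rightarrow> 'a" where "Lval m u = (m+u)*(1 - m*u)"

definition Qpoly :: "'a::field \<Rightarrow> 'a \<Rightarrow> 'a \<Rightarrow> 'a" where
  "Qpoly m u t = 4*m*(m*u^2 - m - 2*u)*(m*t^2 - 2*t - m) *
     ((m*u^2 - m - 2*u)*t^2 + (-4*m*u - 2*u^2 + 2)*t - m*u^2 + m + 2*u)"

definition onC :: "'a::field \<Rightarrow> 'a \<Rightarrow> 'a \<Rightarrow> 'a \<Rightarrow> bool" where
  "onC m u t w \<longleftrightarrow> w^2 = Qpoly m u t"

definition onE :: "'a::field \<Rightarrow> 'a \<Rightarrow> 'a \<Rightarrow> 'a \<Rightarrow> bool" where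
  "onE m u x y \<longleftrightarrow> y^2 = x*(x - nval m u)*(x - nval m u*(u^2+1))"

definition Ppoly :: "'a::field \<Rightarrow> 'a \<Rightarrow> 'a \<Rightarrow> 'a" where
  "Ppoly m u t = -4*(m*u - 1)*(m+u)*m*t + 2*(m^2*u^2 + m^2 - 2*m*u + 2)*m*t^2 + 2*kval m u*m^2"

text \<open>Forward map (t,w) to (x,y); y is the value making the inverse formula for t hold.\<close>
definition phi_x :: "'a::field \<Rightarrow> 'a \<Rightarrow> 'a \<Rightarrow> 'a \<Rightarrow> 'a" where
  "phi_x m u t w = kval m u / (4*t^2) * (Ppoly m u t + m*w)"
definition phi_y :: "'a::field \<Rightarrow> 'a \<Rightarrow> 'a \<Rightarrow> 'a \<Rightarrow> 'a" where
  "phi_y m u t w = - m*kval m u*(phi_x m u t w - X0 m u)/t - Lval m u*(phi_x m u t w - nval m u)"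

text \<open>Inverse map (x,y) to (t,w); w is obtained by solving the formula for x.\<close>
definition line_val :: "'a::field \<Rightarrow> 'a \<Rightarrow> 'a \<Rightarrow> 'a \<Rightarrow> 'a" where
  "line_val m u x y = y + Lval m u*(x - nval m u)"
definition psi_t :: "'a::field \<Rightarrow> 'a \<Rightarrow> 'a \<Rightarrow> 'a \<Rightarrow> 'a" where
  "psi_t m u x y = - m*kval m u*(x - X0 m u) / line_val m u x y"
definition psi_w :: "'a::field \<Rightarrow> 'a \<Rightarrow> 'a \<Rightarrow> 'a \<Rightarrow> 'a" where
  "psi_w m u x y = (4*(psi_t m u x y)^2*x / kval m u - Ppoly m u (psi_t m u x y)) / m"

definition condA :: "real \<Rightarrow> real \<Rightarrow> real \<Rightarrow> bool" where
  "condA m u t \<longleftrightarrow> 0 < t \<and> t < (1 - m*u)/(m+u)"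

definition Ppt :: "real \<Rightarrow> real \<Rightarrow> real \<times> real" where
  "Ppt m u = ((m^2+1)*(m+u)^2, u^2*(m^2+1)^2*(m+u)*(m*u - 1))"

definition tri_t :: "real \<Rightarrow> real \<Rightarrow> real \<Rightarrow> real" where
  "tri_t a b c = tan (halpha a b c / 2)"
definition tri_w :: "real \<Rightarrow> real \<Rightarrow> real \<Rightarrow> real \<Rightarrow> real \<Rightarrow> real" where
  "tri_w m u a b c = (m^2+1)*(u^2+1)*((tri_t a b c)^2+1) * sinh a * sin (hbeta a b c) * sin (hgamma a b c)"

end

theory Submission
  imports Defs
begin

(* Write alpha = 2 arctan t, beta = 2 arctan u and A = 2 arctan m.  Then the third angle
   gamma = pi - alpha - beta - A has rational cosine and sine, and sin gamma > 0 is exactly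
   condition (A).  By the dual law of cosines the sides are determined by the angles,
   cosh a = (cos alpha + cos beta cos gamma) / (sin beta sin gamma), and
   (sinh a sin beta sin gamma)^2 equals the angle Gram expression
   cos^2 alpha + cos^2 beta + cos^2 gamma + 2 cos alpha cos beta cos gamma - 1,
   which after clearing the denominators (1 + t^2)(1 + u^2)(1 + m^2) is Q(t).  Hence
   e^a = cosh a + sinh a is rational iff Q(t) is a rational square, and conversely every
   admissible t gives angles with sum below pi, hence a triangle.
   The birational equivalence with E consists of polynomial identities modulo the curve
   equations (proved with Groebner bases).  A triangle whose point on E has x = X0 is sent
   to P; all other triangles land where psi inverts phi. *)

section \<open>The quartic C and the elliptic curve E\<close>

lemma onE_phi:
  fixes m u t w :: "'a::field_char_0"
  assumes C: "onC m u t w" and t: "t \<noteq> 0"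
  shows "onE m u (phi_x m u t w) (phi_y m u t w)"
proof -
  define X where "X = kval m u * (Ppoly m u t + m * w)"
  define Y where "Y = - m * kval m u * (X - 4 * t^2 * X0 m u) - t * Lval m u * (X - 4 * t^2 * nval m u)"
  have x: "phi_x m u t w = X / (4 * t^2)"
    by (simp add: phi_x_def X_def)
  have y: "phi_y m u t w = Y / (4 * t^3)"
    unfolding phi_y_def x Y_def using t by (simp add: field_simps) algebra
  have "4 * Y^2 = X * (X - 4 * t^2 * nval m u) * (X - 4 * t^2 * nval m u * (u^2 + 1))"
    using C unfolding onC_def X_def Y_def kval_def nval_def X0_def Lval_def Ppoly_def Qpoly_def
    by algebra
  then show ?thesis
    unfolding onE_def x y using t by (simp add: field_simps)
qed

lemma line_val_phi:
  "line_val m u (phi_x m u t w) (phi_y m u t w) = - m * kval m u * (phi_x m u t w - X0 m u) / t"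
  unfolding line_val_def phi_y_def by simp

lemma psi_phi:
  fixes m u t w :: "'a::field_char_0"
  assumes t: "t \<noteq> 0" and m: "m \<noteq> 0" and k: "kval m u \<noteq> 0"
    and x: "phi_x m u t w \<noteq> X0 m u"
  shows "line_val m u (phi_x m u t w) (phi_y m u t w) \<noteq> 0"
    and "psi_t m u (phi_x m u t w) (phi_y m u t w) = t"
    and "psi_w m u (phi_x m u t w) (phi_y m u t w) = w"
proof -
  show "line_val m u (phi_x m u t w) (phi_y m u t w) \<noteq> 0"
    unfolding line_val_phi using t m k x by simp
  show pt: "psi_t m u (phi_x m u t w) (phi_y m u t w) = t"
    unfolding psi_t_def line_val_phi using t m k x by (simp add: field_simps)
  show "psi_w m u (phi_x m u t w) (phi_y m u t w) = w"
    unfolding psi_w_def pt unfolding phi_x_def using t m k by (simp add: field_simps)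
qed

text \<open>With psi_t = T / l, this is onC (psi_t, psi_w) multiplied through by l^4.\<close>
lemma onE_imp_onC_homogeneous:
  fixes m u x y :: "'a::field_char_0"
  assumes "onE m u x y"
  defines "T \<equiv> - m * kval m u * (x - X0 m u)" and "l \<equiv> line_val m u x y"
  shows "(4 * T^2 * x - kval m u * (2 * kval m u * m^2 * l^2 - 4 * (m * u - 1) * (m + u) * m * T * l
            + 2 * (m^2 * u^2 + m^2 - 2 * m * u + 2) * m * T^2))^2
    = m^2 * kval m u^2 * (4 * m * (m * u^2 - m - 2 * u) * (m * T^2 - 2 * T * l - m * l^2)
        * ((m * u^2 - m - 2 * u) * T^2 + (- 4 * m * u - 2 * u^2 + 2) * T * l
           + (- m * u^2 + m + 2 * u) * l^2))"
  using assms unfolding onE_def T_def l_def kval_def nval_def X0_def Lval_def line_val_def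
  by algebra

lemma phi_psi:
  fixes m u x y :: "'a::field_char_0"
  assumes E: "onE m u x y" and l: "line_val m u x y \<noteq> 0" and t: "psi_t m u x y \<noteq> 0"
    and m: "m \<noteq> 0" and k: "kval m u \<noteq> 0"
  shows "onC m u (psi_t m u x y) (psi_w m u x y)"
    and "phi_x m u (psi_t m u x y) (psi_w m u x y) = x"
    and "phi_x m u (psi_t m u x y) (psi_w m u x y) \<noteq> X0 m u"
    and "phi_y m u (psi_t m u x y) (psi_w m u x y) = y"
proof -
  define T where "T = - m * kval m u * (x - X0 m u)"
  have tT: "psi_t m u x y = T / line_val m u x y"
    unfolding psi_t_def T_def by simp
  then have T: "T \<noteq> 0" using t by auto
  show px: "phi_x m u (psi_t m u x y) (psi_w m u x y) = x"
    unfolding phi_x_def psi_w_def using t m k by (simp add: field_simps)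
  then show "phi_x m u (psi_t m u x y) (psi_w m u x y) \<noteq> X0 m u"
    using T unfolding T_def by auto
  show "phi_y m u (psi_t m u x y) (psi_w m u x y) = y"
    unfolding phi_y_def px unfolding tT using l T unfolding T_def
    by (simp add: field_simps line_val_def)
  have w: "psi_w m u x y = (4 * T^2 * x - kval m u * (2 * kval m u * m^2 * (line_val m u x y)^2
      - 4 * (m * u - 1) * (m + u) * m * T * line_val m u x y
      + 2 * (m^2 * u^2 + m^2 - 2 * m * u + 2) * m * T^2)) / (m * kval m u * (line_val m u x y)^2)"
    unfolding psi_w_def tT Ppoly_def using m k l by (simp add: field_simps) algebra
  have Q: "Qpoly m u (psi_t m u x y) = 4 * m * (m * u^2 - m - 2 * u)
      * (m * T^2 - 2 * T * line_val m u x y - m * (line_val m u x y)^2)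
      * ((m * u^2 - m - 2 * u) * T^2 + (- 4 * m * u - 2 * u^2 + 2) * T * line_val m u x y
          + (- m * u^2 + m + 2 * u) * (line_val m u x y)^2) / (line_val m u x y)^4"
    unfolding Qpoly_def tT using l by (simp add: field_simps) algebra
  show "onC m u (psi_t m u x y) (psi_w m u x y)"
    unfolding onC_def w Q using onE_imp_onC_homogeneous[OF E, folded T_def] m k l
    by (simp add: field_simps)
qed

lemma finite_square_roots: "finite {w::'a::idom. w^2 = c}"
proof -
  have "{w. w^2 = c} = {w. poly [:-c, 0, 1:] w = 0}"
    by (auto simp: power2_eq_square)
  then show ?thesis using poly_roots_finite[of "[:-c, 0, 1:]"] by simp
qed

lemma finite_monic_cubic_roots: "finite {x::'a::idom. x^3 + p * x^2 + q * x + r = 0}"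
proof -
  have "{x. x^3 + p * x^2 + q * x + r = 0} = {x. poly [:r, q, p, 1:] x = 0}"
    by (auto simp: algebra_simps power2_eq_square power3_eq_cube)
  then show ?thesis using poly_roots_finite[of "[:r, q, p, 1:]"] by simp
qed

lemma X0_fibre_identity:
  fixes m u t :: "'a::field_char_0"
  shows "(4 * t^2 * X0 m u - kval m u * Ppoly m u t)^2 - m^2 * kval m u^2 * Qpoly m u t
     = 16 * (m^2 + 1)^2 * u^2 * t^3
       * ((m^2 * kval m u^2 + u^2 * (m^2 + 1)^2) * t - 2 * m * kval m u * Lval m u)"
  unfolding kval_def X0_def Lval_def Ppoly_def Qpoly_def by algebra

lemma phi_x_eq_X0:
  fixes m u t w :: "'a::field_char_0"
  assumes C: "onC m u t w" and t: "t \<noteq> 0" and x: "phi_x m u t w = X0 m u"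
    and u: "u \<noteq> 0" and m2: "m^2 + 1 \<noteq> 0"
  shows "(m^2 * kval m u^2 + u^2 * (m^2 + 1)^2) * t = 2 * m * kval m u * Lval m u"
    and "kval m u * (Ppoly m u t + m * w) = 4 * t^2 * X0 m u"
proof -
  show w: "kval m u * (Ppoly m u t + m * w) = 4 * t^2 * X0 m u"
    using x t unfolding phi_x_def by (simp add: field_simps)
  then have "4 * t^2 * X0 m u - kval m u * Ppoly m u t = kval m u * m * w"
    by (simp add: algebra_simps)
  then have "16 * (m^2 + 1)^2 * u^2 * t^3
        * ((m^2 * kval m u^2 + u^2 * (m^2 + 1)^2) * t - 2 * m * kval m u * Lval m u)
      = (kval m u * m * w)^2 - m^2 * kval m u^2 * Qpoly m u t"
    using X0_fibre_identity[of t m u] by simp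
  also have "\<dots> = 0"
    using C unfolding onC_def by (simp add: power_mult_distrib)
  finally show "(m^2 * kval m u^2 + u^2 * (m^2 + 1)^2) * t = 2 * m * kval m u * Lval m u"
    using t u m2 by simp
qed

definition nondegenerate :: "'a::field \<Rightarrow> 'a \<Rightarrow> bool" where
  "nondegenerate m u \<longleftrightarrow> m \<noteq> 0 \<and> u \<noteq> 0 \<and> m^2 + 1 \<noteq> 0 \<and> kval m u \<noteq> 0
     \<and> m^2 * kval m u^2 + u^2 * (m^2 + 1)^2 \<noteq> 0"

lemma finite_exceptional_C:
  fixes m u :: "'a::field_char_0"
  assumes "nondegenerate m u"
  shows "finite {(t, w). onC m u t w \<and> (t = 0 \<or> phi_x m u t w = X0 m u)}"
proof -
  have m: "m \<noteq> 0" and k: "kval m u \<noteq> 0" and u: "u \<noteq> 0" and m2: "m^2 + 1 \<noteq> 0"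
    and D: "m^2 * kval m u^2 + u^2 * (m^2 + 1)^2 \<noteq> 0"
    using assms unfolding nondegenerate_def by auto
  define t0 where "t0 = 2 * m * kval m u * Lval m u / (m^2 * kval m u^2 + u^2 * (m^2 + 1)^2)"
  define w0 where "w0 = (4 * t0^2 * X0 m u / kval m u - Ppoly m u t0) / m"
  have "{(t, w). onC m u t w \<and> (t = 0 \<or> phi_x m u t w = X0 m u)}
      \<subseteq> Pair 0 ` {w. w^2 = Qpoly m u 0} \<union> {(t0, w0)}"
  proof (intro subsetI)
    fix p assume "p \<in> {(t, w). onC m u t w \<and> (t = 0 \<or> phi_x m u t w = X0 m u)}"
    then obtain t w where p: "p = (t, w)" and C: "onC m u t w"
      and "t = 0 \<or> phi_x m u t w = X0 m u" by auto
    moreover have "t = t0 \<and> w = w0" if "t \<noteq> 0" "phi_x m u t w = X0 m u"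
    proof
      note fibre = phi_x_eq_X0[OF C that u m2]
      show "t = t0"
        using fibre(1) D unfolding t0_def by (simp add: field_simps)
      moreover have "w = (4 * t^2 * X0 m u / kval m u - Ppoly m u t) / m"
        using fibre(2) m k by (simp add: field_simps)
      ultimately show "w = w0"
        unfolding w0_def by simp
    qed
    ultimately show "p \<in> Pair 0 ` {w. w^2 = Qpoly m u 0} \<union> {(t0, w0)}"
      using p unfolding onC_def by auto
  qed
  then show ?thesis
    by (rule finite_subset) (simp add: finite_square_roots)
qed

lemma finite_exceptional_E:
  fixes m u :: "'a::field_char_0"
  assumes m: "m \<noteq> 0" and k: "kval m u \<noteq> 0"
  shows "finite {(x, y). onE m u x y \<and> (line_val m u x y = 0 \<or> psi_t m u x y = 0)}"
proof -
  define n where "n = nval m u"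
  define L where "L = Lval m u"
  define cubic where
    "cubic x = x^3 + (- n * (u^2 + 2) - L^2) * x^2 + (n^2 * (u^2 + 1) + 2 * L^2 * n) * x
      + (- (L^2 * n^2))" for x
  have "{(x, y). onE m u x y \<and> (line_val m u x y = 0 \<or> psi_t m u x y = 0)}
      \<subseteq> (\<lambda>x. (x, - L * (x - n))) ` {x. cubic x = 0}
        \<union> Pair (X0 m u) ` {y. y^2 = X0 m u * (X0 m u - n) * (X0 m u - n * (u^2 + 1))}"
  proof (intro subsetI)
    fix p assume "p \<in> {(x, y). onE m u x y \<and> (line_val m u x y = 0 \<or> psi_t m u x y = 0)}"
    then obtain x y where p: "p = (x, y)" and E: "onE m u x y"
      and "line_val m u x y = 0 \<or> psi_t m u x y = 0" by auto
    then consider "line_val m u x y = 0" | "x = X0 m u"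
      using m k unfolding psi_t_def by auto
    then show "p \<in> (\<lambda>x. (x, - L * (x - n))) ` {x. cubic x = 0}
        \<union> Pair (X0 m u) ` {y. y^2 = X0 m u * (X0 m u - n) * (X0 m u - n * (u^2 + 1))}"
    proof cases
      case 1
      then have y: "y = - L * (x - n)"
        unfolding line_val_def L_def n_def by (simp add: algebra_simps)
      then have "cubic x = 0"
        using E unfolding onE_def cubic_def n_def by algebra
      with y p show ?thesis by auto
    next
      case 2
      with E p show ?thesis unfolding onE_def n_def by auto
    qed
  qed
  moreover have "finite {x. cubic x = 0}"
    unfolding cubic_def by (rule finite_monic_cubic_roots)
  ultimately show ?thesis
    by (rule finite_subset[OF _ finite_UnI[OF finite_imageI finite_imageI[OF finite_square_roots]]])
qed

lemma nondegenerate_of_real: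
  "nondegenerate (of_real m :: 'a::real_field) (of_real u) \<longleftrightarrow> nondegenerate m u"
proof -
  have k: "kval (of_real m :: 'a) (of_real u) = of_real (kval m u)"
    and m2: "(of_real m :: 'a)^2 + 1 = of_real (m^2 + 1)"
    and D: "(of_real m :: 'a)^2 * kval (of_real m) (of_real u)^2 + (of_real u)^2 * ((of_real m)^2 + 1)^2
       = of_real (m^2 * kval m u^2 + u^2 * (m^2 + 1)^2)"
    by (simp_all add: kval_def)
  show ?thesis
    unfolding nondegenerate_def unfolding D unfolding m2 k of_real_eq_0_iff ..
qed

lemma kval_pos:
  assumes "m > 0" "u > 0" "m * u < (1::real)"
  shows "kval m u > 0"
proof -
  have "m * u * u < 1 * u" using assms by (intro mult_strict_right_mono) auto
  then have "m * u^2 < u" by (simp add: power2_eq_square mult.assoc)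
  then show ?thesis unfolding kval_def using assms by (simp add: algebra_simps)
qed

lemma nondegenerate_real:
  assumes "m > 0" "u > 0" "m * u < (1::real)"
  shows "nondegenerate m u"
proof -
  have "m^2 + 1 > 0" by (intro add_nonneg_pos) auto
  moreover have "m^2 * kval m u^2 + u^2 * (m^2 + 1)^2 > 0"
    using assms \<open>m^2 + 1 > 0\<close> by (intro add_nonneg_pos) auto
  ultimately show ?thesis
    unfolding nondegenerate_def using kval_pos[OF assms] assms by auto
qed

lemma birational_C_E:
  fixes m u :: "'a::field_char_0"
  assumes "nondegenerate m u"
  shows "(\<forall>t w. onC m u t w \<and> t \<noteq> 0 \<and> phi_x m u t w \<noteq> X0 m u \<longrightarrow>
        onE m u (phi_x m u t w) (phi_y m u t w) \<and>
        line_val m u (phi_x m u t w) (phi_y m u t w) \<noteq> 0 \<and>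
        psi_t m u (phi_x m u t w) (phi_y m u t w) = t \<and>
        psi_w m u (phi_x m u t w) (phi_y m u t w) = w)
   \<and> (\<forall>x y. onE m u x y \<and> line_val m u x y \<noteq> 0 \<and> psi_t m u x y \<noteq> 0 \<longrightarrow>
        onC m u (psi_t m u x y) (psi_w m u x y) \<and>
        phi_x m u (psi_t m u x y) (psi_w m u x y) \<noteq> X0 m u \<and>
        phi_x m u (psi_t m u x y) (psi_w m u x y) = x \<and>
        phi_y m u (psi_t m u x y) (psi_w m u x y) = y)
   \<and> finite {(t, w). onC m u t w \<and> (t = 0 \<or> phi_x m u t w = X0 m u)}
   \<and> finite {(x, y). onE m u x y \<and> (line_val m u x y = 0 \<or> psi_t m u x y = 0)}"
proof -
  have m: "m \<noteq> 0" and k: "kval m u \<noteq> 0"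
    using assms unfolding nondegenerate_def by auto
  have forward: "onE m u (phi_x m u t w) (phi_y m u t w)
      \<and> line_val m u (phi_x m u t w) (phi_y m u t w) \<noteq> 0
      \<and> psi_t m u (phi_x m u t w) (phi_y m u t w) = t
      \<and> psi_w m u (phi_x m u t w) (phi_y m u t w) = w"
    if "onC m u t w" "t \<noteq> 0" "phi_x m u t w \<noteq> X0 m u" for t w
    using onE_phi[OF that(1,2)] psi_phi[OF that(2) m k that(3)] by simp
  have backward: "onC m u (psi_t m u x y) (psi_w m u x y)
      \<and> phi_x m u (psi_t m u x y) (psi_w m u x y) \<noteq> X0 m u
      \<and> phi_x m u (psi_t m u x y) (psi_w m u x y) = x
      \<and> phi_y m u (psi_t m u x y) (psi_w m u x y) = y"
    if "onE m u x y" "line_val m u x y \<noteq> 0" "psi_t m u x y \<noteq> 0" for x y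
    using phi_psi[OF that m k] by simp
  show ?thesis
    using forward backward finite_exceptional_C[OF assms] finite_exceptional_E[OF m k]
    by blast
qed

lemma phi_determines_t:
  fixes m u :: "'a::field_char_0"
  assumes "nondegenerate m u" and C: "onC m u t w" "onC m u t' w'" and t: "t \<noteq> 0" "t' \<noteq> 0"
    and x: "phi_x m u t w = phi_x m u t' w'" and y: "phi_y m u t w = phi_y m u t' w'"
  shows "t = t'"
proof (cases "phi_x m u t w = X0 m u")
  case True
  then show ?thesis
    using phi_x_eq_X0(1)[OF C(1) t(1)] phi_x_eq_X0(1)[OF C(2) t(2)] x assms(1)
    unfolding nondegenerate_def by (metis mult_left_cancel)
next
  case False
  then show ?thesis
    using psi_phi(2)[OF t(1) _ _ False] psi_phi(2)[of t' m u w'] t(2) x y assms(1)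
    unfolding nondegenerate_def by metis
qed

lemma phi_eq_Ppt:
  assumes "phi_x m u t w = X0 m u"
  shows "(phi_x m u t w, phi_y m u t w) = Ppt m u"
  unfolding phi_y_def assms Ppt_def X0_def Lval_def nval_def kval_def
  by (simp add: algebra_simps) algebra

lemma Rats_phi_psi:
  assumes "m \<in> \<rat>" "u \<in> \<rat>"
  shows "t \<in> \<rat> \<Longrightarrow> w \<in> \<rat> \<Longrightarrow> phi_x m u t w \<in> \<rat> \<and> phi_y m u t w \<in> \<rat>"
    and "x \<in> \<rat> \<Longrightarrow> y \<in> \<rat> \<Longrightarrow> psi_t m u x y \<in> \<rat> \<and> psi_w m u x y \<in> \<rat>"
  using assms
  by (simp_all add: phi_x_def phi_y_def psi_t_def psi_w_def line_val_def Ppoly_def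
      kval_def X0_def Lval_def nval_def)

section \<open>Hyperbolic triangles and their angles\<close>

lemma hyp_triangle_rotate: "hyp_triangle a b c \<Longrightarrow> hyp_triangle b c a"
  unfolding hyp_triangle_def by linarith

definition hyp_gram :: "real \<Rightarrow> real \<Rightarrow> real \<Rightarrow> real" where
  "hyp_gram a b c = 1 + 2 * cosh a * cosh b * cosh c - (cosh a)^2 - (cosh b)^2 - (cosh c)^2"

lemma hyp_gram_rotate: "hyp_gram b c a = hyp_gram a b c"
  unfolding hyp_gram_def by (simp add: algebra_simps)

lemma hangle_trig:
  assumes "hyp_triangle a b c"
  shows "cos (hangle a b c) = (cosh b * cosh c - cosh a) / (sinh b * sinh c)"
    and "sin (hangle a b c) = sqrt (hyp_gram a b c) / (sinh b * sinh c)"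
    and "hyp_gram a b c > 0" and "sin (hangle a b c) > 0"
    and "0 < hangle a b c" and "hangle a b c < pi"
proof -
  have a: "a > 0" and b: "b > 0" and c: "c > 0" and "a < b + c" and "\<bar>b - c\<bar> < a"
    using assms unfolding hyp_triangle_def by auto
  have p: "sinh b * sinh c > 0" using b c by simp
  have "cosh a < cosh (b + c)" using \<open>a < b + c\<close> a b c by (simp add: cosh_real_nonneg_less_iff)
  then have upper: "cosh a < cosh b * cosh c + sinh b * sinh c" by (simp add: cosh_add)
  have "cosh (b - c) < cosh a"
    using cosh_real_nonneg_less_iff[of "\<bar>b - c\<bar>" a] \<open>\<bar>b - c\<bar> < a\<close> a by simp
  then have lower: "cosh b * cosh c - sinh b * sinh c < cosh a" by (simp add: cosh_diff)
  define r where "r = (cosh b * cosh c - cosh a) / (sinh b * sinh c)"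
  have r: "-1 < r" "r < 1" unfolding r_def using upper lower p by (simp_all add: field_simps)
  show "cos (hangle a b c) = (cosh b * cosh c - cosh a) / (sinh b * sinh c)"
    unfolding hangle_def r_def[symmetric] using r by simp
  have "1 - r^2 = ((sinh b * sinh c)^2 - (cosh b * cosh c - cosh a)^2) / (sinh b * sinh c)^2"
    unfolding r_def using b c by (simp add: field_simps)
  also have "(sinh b * sinh c)^2 - (cosh b * cosh c - cosh a)^2 = hyp_gram a b c"
    unfolding hyp_gram_def power_mult_distrib sinh_square_eq by algebra
  finally have gram: "1 - r^2 = hyp_gram a b c / (sinh b * sinh c)^2" .
  moreover have "1 - r^2 > 0" using r by (simp add: abs_square_less_1)
  ultimately have "hyp_gram a b c / (sinh b * sinh c)^2 > 0" by simp
  then show "hyp_gram a b c > 0" using p by (simp add: zero_less_divide_iff)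
  have "sin (hangle a b c) = sqrt (1 - r^2)"
    unfolding hangle_def r_def[symmetric] using r by (simp add: sin_arccos)
  also have "\<dots> = sqrt (hyp_gram a b c) / (sinh b * sinh c)"
    using gram p by (simp add: real_sqrt_divide)
  finally show sin: "sin (hangle a b c) = sqrt (hyp_gram a b c) / (sinh b * sinh c)" .
  show "sin (hangle a b c) > 0" unfolding sin using \<open>hyp_gram a b c > 0\<close> p by simp
  show "0 < hangle a b c" "hangle a b c < pi"
    unfolding hangle_def r_def[symmetric] using r arccos_lt_bounded by auto
qed

lemma dual_law_of_cosines:
  assumes "hyp_triangle a b c"
  shows "cos (hangle a b c) + cos (hangle b c a) * cos (hangle c a b)
       = sin (hangle b c a) * sin (hangle c a b) * cosh a"
proof -
  have T2: "hyp_triangle b c a" and T3: "hyp_triangle c a b"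
    using assms hyp_triangle_rotate by blast+
  have "a > 0" "b > 0" "c > 0" using assms unfolding hyp_triangle_def by auto
  then have sh: "sinh a > 0" "sinh b > 0" "sinh c > 0" by auto
  note t1 = hangle_trig[OF assms] and t2 = hangle_trig[OF T2] and t3 = hangle_trig[OF T3]
  have g: "hyp_gram b c a = hyp_gram a b c" "hyp_gram c a b = hyp_gram a b c"
    using hyp_gram_rotate by metis+
  have "sin (hangle b c a) * sin (hangle c a b) = hyp_gram a b c / ((sinh a)^2 * sinh b * sinh c)"
    unfolding t2(2) t3(2) g using sh t1(3) by (simp add: field_simps power2_eq_square)
  moreover have "cos (hangle a b c) + cos (hangle b c a) * cos (hangle c a b)
      = hyp_gram a b c / ((sinh a)^2 * sinh b * sinh c) * cosh a"
  proof -
    have "cos (hangle a b c) + cos (hangle b c a) * cos (hangle c a b)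
        = ((cosh b * cosh c - cosh a) * (sinh a)^2 + (cosh c * cosh a - cosh b) * (cosh a * cosh b - cosh c))
          / ((sinh a)^2 * sinh b * sinh c)"
      unfolding t1(1) t2(1) t3(1) using sh by (simp add: field_simps power2_eq_square)
    also have "\<dots> = hyp_gram a b c / ((sinh a)^2 * sinh b * sinh c) * cosh a"
      unfolding hyp_gram_def sinh_square_eq by (simp add: field_simps) algebra
    finally show ?thesis .
  qed
  ultimately show ?thesis by simp
qed

definition angle_cosh_side :: "real \<Rightarrow> real \<Rightarrow> real \<Rightarrow> real" where
  "angle_cosh_side x y z = (cos x + cos y * cos z) / (sin y * sin z)"

definition angle_gram :: "real \<Rightarrow> real \<Rightarrow> real \<Rightarrow> real" where
  "angle_gram x y z = (cos x)^2 + (cos y)^2 + (cos z)^2 + 2 * cos x * cos y * cos z - 1"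

lemma angle_gram_rotate: "angle_gram y z x = angle_gram x y z"
  unfolding angle_gram_def by (simp add: algebra_simps)

lemma angle_cosh_side_gt_1:
  assumes "0 < x" "0 < y" "0 < z" "x + y + z < pi"
  shows "angle_cosh_side x y z > 1"
proof -
  have "sin y > 0" "sin z > 0" using assms by (auto intro!: sin_gt_zero)
  moreover have "cos (pi - (y + z)) < cos x"
    using assms by (subst cos_mono_less_eq) auto
  then have "sin y * sin z < cos x + cos y * cos z" by (simp add: cos_add)
  ultimately show ?thesis unfolding angle_cosh_side_def by (simp add: field_simps)
qed

lemma sinh_arcosh_angle_cosh_side:
  assumes "0 < x" "0 < y" "0 < z" "x + y + z < pi"
  shows "sinh (arcosh (angle_cosh_side x y z)) = sqrt (angle_gram x y z) / (sin y * sin z)"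
    and "angle_gram x y z > 0"
proof -
  have g: "angle_cosh_side x y z > 1" using angle_cosh_side_gt_1[OF assms] .
  have "sin y > 0" "sin z > 0" using assms by (auto intro!: sin_gt_zero)
  then have "(angle_cosh_side x y z)^2 - 1
      = ((cos x + cos y * cos z)^2 - (sin y)^2 * (sin z)^2) / (sin y * sin z)^2"
    unfolding angle_cosh_side_def by (simp add: field_simps)
  also have "(cos x + cos y * cos z)^2 - (sin y)^2 * (sin z)^2 = angle_gram x y z"
    unfolding angle_gram_def sin_squared_eq by algebra
  finally have sq: "(angle_cosh_side x y z)^2 - 1 = angle_gram x y z / (sin y * sin z)^2" .
  moreover have "(angle_cosh_side x y z)^2 > 1" using g by (simp add: one_less_power)
  ultimately have "angle_gram x y z / (sin y * sin z)^2 > 0" by simp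
  then show "angle_gram x y z > 0" by (simp add: zero_less_divide_iff)
  show "sinh (arcosh (angle_cosh_side x y z)) = sqrt (angle_gram x y z) / (sin y * sin z)"
    using sinh_arcosh_real[of "angle_cosh_side x y z"] g sq \<open>sin y > 0\<close> \<open>sin z > 0\<close>
    by (simp add: real_sqrt_divide)
qed

lemma law_of_cosines_angle_cosh_side:
  assumes "0 < x" "0 < y" "0 < z" "x + y + z < pi"
  shows "angle_cosh_side y z x * angle_cosh_side z x y - angle_cosh_side x y z
     = cos x * ((sqrt (angle_gram x y z) / (sin z * sin x)) * (sqrt (angle_gram x y z) / (sin x * sin y)))"
proof -
  have s: "sin x > 0" "sin y > 0" "sin z > 0" using assms by (auto intro!: sin_gt_zero)
  have "sqrt (angle_gram x y z) * sqrt (angle_gram x y z) = angle_gram x y z"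
    using sinh_arcosh_angle_cosh_side(2)[OF assms] by simp
  moreover have "angle_cosh_side y z x * angle_cosh_side z x y - angle_cosh_side x y z
      = ((cos y + cos z * cos x) * (cos z + cos x * cos y) - (cos x + cos y * cos z) * (sin x)^2)
        / ((sin x)^2 * sin y * sin z)"
    unfolding angle_cosh_side_def using s by (simp add: field_simps power2_eq_square)
  moreover have "(cos y + cos z * cos x) * (cos z + cos x * cos y) - (cos x + cos y * cos z) * (sin x)^2
      = cos x * angle_gram x y z"
    unfolding angle_gram_def sin_squared_eq by algebra
  ultimately show ?thesis using s by (simp add: field_simps power2_eq_square)
qed

lemma hangle_eq_of_law_of_cosines:
  assumes "a > 0" "b > 0" "c > 0" "0 < x" "x < pi"
    and law: "cosh b * cosh c - cosh a = cos x * (sinh b * sinh c)"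
  shows "hangle a b c = x" and "a < b + c"
proof -
  have p: "sinh b * sinh c > 0" using assms by simp
  then show "hangle a b c = x" unfolding hangle_def law using assms by (simp add: arccos_cos)
  have "cos pi < cos x" using assms by (subst cos_mono_less_eq) auto
  then have "- cos x * (sinh b * sinh c) < 1 * (sinh b * sinh c)"
    using p by (intro mult_strict_right_mono) auto
  then have "cosh a < cosh (b + c)" using law by (simp add: cosh_add)
  then show "a < b + c" using assms by (simp add: cosh_real_nonneg_less_iff)
qed

lemma hyp_triangle_of_angles:
  assumes "0 < x" "0 < y" "0 < z" "x + y + z < pi"
  defines "a \<equiv> arcosh (angle_cosh_side x y z)" and "b \<equiv> arcosh (angle_cosh_side y z x)"
    and "c \<equiv> arcosh (angle_cosh_side z x y)"
  shows "hyp_triangle a b c" "hangle a b c = x" "hangle b c a = y" "hangle c a b = z"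
    and "cosh a = angle_cosh_side x y z" "cosh b = angle_cosh_side y z x" "cosh c = angle_cosh_side z x y"
    and "sinh a = sqrt (angle_gram x y z) / (sin y * sin z)"
    and "sinh b = sqrt (angle_gram x y z) / (sin z * sin x)"
    and "sinh c = sqrt (angle_gram x y z) / (sin x * sin y)"
proof -
  have A2: "0 < y" "0 < z" "0 < x" "y + z + x < pi"
    and A3: "0 < z" "0 < x" "0 < y" "z + x + y < pi" using assms by auto
  have g1: "angle_cosh_side x y z > 1" and g2: "angle_cosh_side y z x > 1"
    and g3: "angle_cosh_side z x y > 1"
    using angle_cosh_side_gt_1 assms A2 A3 by blast+
  show ca: "cosh a = angle_cosh_side x y z" and cb: "cosh b = angle_cosh_side y z x"
    and cc: "cosh c = angle_cosh_side z x y"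
    unfolding a_def b_def c_def using g1 g2 g3 by auto
  show sa: "sinh a = sqrt (angle_gram x y z) / (sin y * sin z)"
    unfolding a_def using sinh_arcosh_angle_cosh_side(1)[OF assms(1-4)] .
  show sb: "sinh b = sqrt (angle_gram x y z) / (sin z * sin x)"
    unfolding b_def using sinh_arcosh_angle_cosh_side(1)[OF A2] by (simp add: angle_gram_rotate)
  show sc: "sinh c = sqrt (angle_gram x y z) / (sin x * sin y)"
    unfolding c_def using sinh_arcosh_angle_cosh_side(1)[OF A3] by (simp add: angle_gram_rotate)
  have pos: "a > 0" "b > 0" "c > 0" unfolding a_def b_def c_def using g1 g2 g3 by auto
  have "cosh b * cosh c - cosh a = cos x * (sinh b * sinh c)"
    unfolding ca cb cc sb sc using law_of_cosines_angle_cosh_side[OF assms(1-4)] .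
  note r1 = hangle_eq_of_law_of_cosines[OF pos assms(1) _ this]
  have "cosh c * cosh a - cosh b = cos y * (sinh c * sinh a)"
    unfolding ca cb cc sa sc using law_of_cosines_angle_cosh_side[OF A2]
    by (simp add: angle_gram_rotate)
  note r2 = hangle_eq_of_law_of_cosines[OF pos(2,3,1) A2(1) _ this]
  have "cosh a * cosh b - cosh c = cos z * (sinh a * sinh b)"
    unfolding ca cb cc sa sb using law_of_cosines_angle_cosh_side[OF A3]
    by (simp add: angle_gram_rotate)
  note r3 = hangle_eq_of_law_of_cosines[OF pos(3,1,2) A3(1) _ this]
  have "x < pi" "y < pi" "z < pi" using assms by auto
  then show "hangle a b c = x" "hangle b c a = y" "hangle c a b = z"
    and "hyp_triangle a b c" using r1 r2 r3 pos unfolding hyp_triangle_def by auto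
qed

lemma cosh_eq_angle_cosh_side:
  assumes "hyp_triangle a b c"
  shows "cosh a = angle_cosh_side (hangle a b c) (hangle b c a) (hangle c a b)"
proof -
  have "sin (hangle b c a) > 0" "sin (hangle c a b) > 0"
    using hangle_trig(4) assms hyp_triangle_rotate by blast+
  then show ?thesis
    unfolding angle_cosh_side_def dual_law_of_cosines[OF assms] by simp
qed

lemma sinh_sin_sin_square_eq_angle_gram:
  assumes "hyp_triangle a b c"
  shows "(sinh a * sin (hangle b c a) * sin (hangle c a b))^2
    = angle_gram (hangle a b c) (hangle b c a) (hangle c a b)"
proof -
  have "(sinh a * sin (hangle b c a) * sin (hangle c a b))^2
      = (cosh a * (sin (hangle b c a) * sin (hangle c a b)))^2
        - (sin (hangle b c a))^2 * (sin (hangle c a b))^2"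
    unfolding power_mult_distrib sinh_square_eq by algebra
  also have "cosh a * (sin (hangle b c a) * sin (hangle c a b))
      = cos (hangle a b c) + cos (hangle b c a) * cos (hangle c a b)"
    using dual_law_of_cosines[OF assms] by simp
  finally show ?thesis
    unfolding angle_gram_def sin_squared_eq by algebra
qed

section \<open>Rational angle parameters\<close>

definition cos_param :: "real \<Rightarrow> real" where "cos_param t = (1 - t^2) / (1 + t^2)"
definition sin_param :: "real \<Rightarrow> real" where "sin_param t = 2 * t / (1 + t^2)"

lemma one_plus_square_pos: "1 + t^2 > (0::real)"
  by (simp add: add_pos_nonneg)

lemma cos_sin_tan_half:
  assumes "0 < x" "x < pi"
  shows "cos x = cos_param (tan (x / 2))" "sin x = sin_param (tan (x / 2))" "tan (x / 2) > 0"
proof -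
  have "cos (x / 2) \<noteq> 0" using assms cos_gt_zero_pi[of "x / 2"] by auto
  from cos_tan_half[OF this] show "cos x = cos_param (tan (x / 2))" by (simp add: cos_param_def)
  show "sin x = sin_param (tan (x / 2))" using sin_tan_half[of "x / 2"] by (simp add: sin_param_def)
  show "tan (x / 2) > 0" using assms by (intro tan_gt_zero) auto
qed

lemma cos_sin_two_arctan: "cos (2 * arctan t) = cos_param t" "sin (2 * arctan t) = sin_param t"
  using cos_tan_half[OF cos_arctan_not_zero, of t] sin_tan_half[of "arctan t"]
  by (simp_all add: tan_arctan cos_param_def sin_param_def)

lemma param_eq_sin_div_one_plus_cos: "t = sin_param t / (1 + cos_param t)"
proof -
  have "1 + cos_param t = 2 / (1 + t^2)"
    unfolding cos_param_def using one_plus_square_pos[of t] by (simp add: field_simps)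
  then show ?thesis
    unfolding sin_param_def using one_plus_square_pos[of t] by (simp add: field_simps)
qed

text \<open>(1 + i t)(1 + i u)(1 + i m) = prod_re + i prod_im with squared modulus prod_norm;
  cos_rest and sin_rest are the cosine and sine of pi - x - y - z when x, y, z have
  parameters t, u, m.\<close>
definition prod_re :: "real \<Rightarrow> real \<Rightarrow> real \<Rightarrow> real" where
  "prod_re t u m = 1 - t * u - t * m - u * m"
definition prod_im :: "real \<Rightarrow> real \<Rightarrow> real \<Rightarrow> real" where
  "prod_im t u m = t + u + m - t * u * m"
definition prod_norm :: "real \<Rightarrow> real \<Rightarrow> real \<Rightarrow> real" where
  "prod_norm t u m = (1 + t^2) * (1 + u^2) * (1 + m^2)"
definition cos_rest :: "real \<Rightarrow> real \<Rightarrow> real \<Rightarrow> real" where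
  "cos_rest t u m = - ((prod_re t u m)^2 - (prod_im t u m)^2) / prod_norm t u m"
definition sin_rest :: "real \<Rightarrow> real \<Rightarrow> real \<Rightarrow> real" where
  "sin_rest t u m = 2 * prod_re t u m * prod_im t u m / prod_norm t u m"

lemma prod_norm_pos: "prod_norm t u m > 0"
  unfolding prod_norm_def using one_plus_square_pos by simp

lemma cos_sin_rest:
  assumes "cos x = cos_param t" "sin x = sin_param t" "cos y = cos_param u" "sin y = sin_param u"
    and "cos z = cos_param m" "sin z = sin_param m"
  shows "cos (pi - x - y - z) = cos_rest t u m" "sin (pi - x - y - z) = sin_rest t u m"
proof -
  define Dt Du Dm where "Dt = 1 + t^2" and "Du = 1 + u^2" and "Dm = 1 + m^2"
  have nz: "Dt \<noteq> 0" "Du \<noteq> 0" "Dm \<noteq> 0"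
    unfolding Dt_def Du_def Dm_def using one_plus_square_pos by (metis less_irrefl)+
  have N: "prod_norm t u m = Dt * Du * Dm" unfolding prod_norm_def Dt_def Du_def Dm_def ..
  have e: "pi - x - y - z = pi - (x + y + z)" by simp
  note params = assms[unfolded cos_param_def sin_param_def, folded Dt_def Du_def Dm_def]
  have "cos (pi - x - y - z) = - (((1 - t^2) * (1 - u^2) - 2 * t * (2 * u)) * (1 - m^2)
      - (2 * t * (1 - u^2) + (1 - t^2) * (2 * u)) * (2 * m)) / (Dt * Du * Dm)"
    unfolding e cos_pi_minus cos_add sin_add params using nz by (simp add: field_simps)
  also have "\<dots> = cos_rest t u m"
    unfolding cos_rest_def N prod_re_def prod_im_def by (rule arg_cong[where f = "\<lambda>v. v / _"]) algebra
  finally show "cos (pi - x - y - z) = cos_rest t u m" .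
  have "sin (pi - x - y - z) = ((2 * t * (1 - u^2) + (1 - t^2) * (2 * u)) * (1 - m^2)
      + ((1 - t^2) * (1 - u^2) - 2 * t * (2 * u)) * (2 * m)) / (Dt * Du * Dm)"
    unfolding e sin_pi_minus cos_add sin_add params using nz by (simp add: field_simps)
  also have "\<dots> = sin_rest t u m"
    unfolding sin_rest_def N prod_re_def prod_im_def by (rule arg_cong[where f = "\<lambda>v. v / _"]) algebra
  finally show "sin (pi - x - y - z) = sin_rest t u m" .
qed

lemma sin_rest_pos_iff_condA:
  assumes "m > 0" "u > 0" "t > 0" "m * u < 1"
  shows "0 < sin_rest t u m \<longleftrightarrow> condA m u t"
proof -
  have "t * (u * m) < t * 1" using assms by (intro mult_strict_left_mono) (auto simp: mult.commute)
  then have "t * u * m < t" by (simp add: mult.assoc)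
  then have "prod_im t u m > 0" unfolding prod_im_def using assms by linarith
  then have "0 < sin_rest t u m \<longleftrightarrow> 0 < prod_re t u m"
    unfolding sin_rest_def using prod_norm_pos[of t u m]
    by (simp add: zero_less_divide_iff zero_less_mult_iff)
  also have "\<dots> \<longleftrightarrow> t * (m + u) < 1 - m * u" unfolding prod_re_def by (simp add: algebra_simps)
  also have "\<dots> \<longleftrightarrow> t < (1 - m * u) / (m + u)" using assms by (simp add: field_simps)
  finally show ?thesis unfolding condA_def using assms by simp
qed

lemma Qpoly_eq_param_gram:
  "(prod_norm t u m)^2 * ((cos_param t)^2 + (cos_param u)^2 + (cos_rest t u m)^2
     + 2 * cos_param t * cos_param u * cos_rest t u m - 1) = Qpoly m u t"
proof -
  define Dt Du Dm where "Dt = 1 + t^2" and "Du = 1 + u^2" and "Dm = 1 + m^2"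
  have nz: "Dt \<noteq> 0" "Du \<noteq> 0" "Dm \<noteq> 0"
    unfolding Dt_def Du_def Dm_def using one_plus_square_pos by (metis less_irrefl)+
  define S where "S = (prod_re t u m)^2 - (prod_im t u m)^2"
  have "(prod_norm t u m)^2 * ((cos_param t)^2 + (cos_param u)^2 + (cos_rest t u m)^2
     + 2 * cos_param t * cos_param u * cos_rest t u m - 1)
    = ((1 - t^2) * Du * Dm)^2 + ((1 - u^2) * Dt * Dm)^2 + S^2
      - 2 * (1 - t^2) * (1 - u^2) * Dm * S - (Dt * Du * Dm)^2"
    unfolding cos_param_def cos_rest_def prod_norm_def S_def[symmetric]
      Dt_def[symmetric] Du_def[symmetric] Dm_def[symmetric]
    using nz by (simp add: field_simps power2_eq_square)
  also have "\<dots> = Qpoly m u t"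
    unfolding Dt_def Du_def Dm_def S_def prod_re_def prod_im_def Qpoly_def by algebra
  finally show ?thesis .
qed

lemma arctan_sum_lt_pi_half:
  assumes "m > 0" "u > 0" "m * u < 1" "condA m u t"
  shows "arctan t + arctan u + arctan m < pi / 2"
proof -
  have t: "t > 0" and tl: "t < (1 - m * u) / (m + u)" using assms unfolding condA_def by auto
  have "arctan u < arctan (1 / m)"
    using assms by (simp add: arctan_less_iff field_simps mult.commute)
  also have "arctan (1 / m) = pi / 2 - arctan m"
    using arctan_inverse[of m] assms by (simp add: inverse_eq_divide)
  finally have mu: "0 < arctan m + arctan u" "arctan m + arctan u < pi / 2"
    using assms by (simp_all add: add_pos_pos)
  then have "cos (arctan m + arctan u) \<noteq> 0"
    using cos_gt_zero_pi[of "arctan m + arctan u"] by auto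
  then have "tan (arctan m + arctan u) = (m + u) / (1 - m * u)"
    using tan_add[OF cos_arctan_not_zero cos_arctan_not_zero] by (simp add: tan_arctan)
  then have sum: "arctan ((m + u) / (1 - m * u)) = arctan m + arctan u"
    using arctan_tan[of "arctan m + arctan u"] mu by simp
  have pos: "(m + u) / (1 - m * u) > 0" using assms by simp
  have "arctan ((1 - m * u) / (m + u)) = arctan (1 / ((m + u) / (1 - m * u)))" by simp
  also have "\<dots> = pi / 2 - arctan ((m + u) / (1 - m * u))"
    using arctan_inverse[of "(m + u) / (1 - m * u)"] pos by simp
  finally have "arctan ((1 - m * u) / (m + u)) = pi / 2 - arctan m - arctan u" using sum by simp
  moreover have "arctan t < arctan ((1 - m * u) / (m + u))" using tl by (simp add: arctan_less_iff)
  ultimately show ?thesis by simp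
qed

section \<open>Heron triangles with area parameter m and angle parameter u\<close>

lemma sinh_rat_of_exp_rat:
  assumes "exp (a::real) \<in> \<rat>" shows "sinh a \<in> \<rat>"
proof -
  have "sinh a = (exp a - inverse (exp a)) / 2" using sinh_field_def[of a] by (simp add: exp_minus)
  moreover have "(exp a - inverse (exp a)) / 2 \<in> \<rat>" using assms by simp
  ultimately show ?thesis by metis
qed

lemma heron_mu_trig:
  assumes "(a, b, c) \<in> heron_mu m u"
  defines "t \<equiv> tri_t a b c"
  shows "hyp_triangle a b c" and "t > 0"
    and "cos (halpha a b c) = cos_param t" "sin (halpha a b c) = sin_param t"
    and "cos (hbeta a b c) = cos_param u" "sin (hbeta a b c) = sin_param u"
    and "cos (hgamma a b c) = cos_rest t u m" "sin (hgamma a b c) = sin_rest t u m"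
proof -
  have T: "hyp_triangle a b c" and m: "has_rat_param (harea a b c) m"
    and u: "has_rat_param (hbeta a b c) u"
    using assms unfolding heron_mu_def heron_def by auto
  show "hyp_triangle a b c" by (fact T)
  have "0 < halpha a b c" "halpha a b c < pi"
    unfolding halpha_def using hangle_trig[OF T] by auto
  from cos_sin_tan_half[OF this, folded tri_t_def]
  show x: "cos (halpha a b c) = cos_param t" "sin (halpha a b c) = sin_param t" "t > 0"
    unfolding t_def by auto
  show y: "cos (hbeta a b c) = cos_param u" "sin (hbeta a b c) = sin_param u"
    using u unfolding has_rat_param_def cos_param_def sin_param_def by auto
  have A: "cos (harea a b c) = cos_param m" "sin (harea a b c) = sin_param m"
    using m unfolding has_rat_param_def cos_param_def sin_param_def by auto
  have "hgamma a b c = pi - halpha a b c - hbeta a b c - harea a b c"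
    unfolding harea_def by simp
  then show "cos (hgamma a b c) = cos_rest t u m" "sin (hgamma a b c) = sin_rest t u m"
    using cos_sin_rest[OF x(1,2) y A] by simp_all
qed

lemma heron_mu_tri_t:
  assumes "(a, b, c) \<in> heron_mu m u" "m > 0" "u > 0" "m * u < 1"
  shows "tri_t a b c \<in> \<rat>" and "condA m u (tri_t a b c)"
proof -
  note trig = heron_mu_trig[OF assms(1)]
  have "rat_angle (halpha a b c)" using assms(1) unfolding heron_mu_def heron_def by simp
  then show "tri_t a b c \<in> \<rat>"
    using param_eq_sin_div_one_plus_cos[of "tri_t a b c"] trig(3,4)
    unfolding rat_angle_def by (metis Rats_1 Rats_add Rats_divide)
  have "sin (hgamma a b c) > 0"
    unfolding hgamma_def using hangle_trig(4) trig(1) hyp_triangle_rotate by blast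
  then show "condA m u (tri_t a b c)"
    using sin_rest_pos_iff_condA[OF assms(2,3) trig(2) assms(4)] trig(8) by simp
qed

lemma tri_w_eq:
  "tri_w m u a b c = prod_norm (tri_t a b c) u m * (sinh a * sin (hbeta a b c) * sin (hgamma a b c))"
  unfolding tri_w_def prod_norm_def by (simp add: algebra_simps)

lemma heron_mu_tri_w:
  assumes "(a, b, c) \<in> heron_mu m u" "m \<in> \<rat>" "u \<in> \<rat>" "m > 0" "u > 0" "m * u < 1"
  shows "tri_w m u a b c \<in> \<rat>" and "tri_w m u a b c > 0"
    and "Qpoly m u (tri_t a b c) = (tri_w m u a b c)^2"
proof -
  note trig = heron_mu_trig[OF assms(1)]
  have H: "heron a b c" using assms(1) unfolding heron_mu_def by simp
  then have "sinh a \<in> \<rat>" "sin (hbeta a b c) \<in> \<rat>" "sin (hgamma a b c) \<in> \<rat>"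
    using sinh_rat_of_exp_rat unfolding heron_def rat_length_def rat_angle_def by auto
  moreover have "prod_norm (tri_t a b c) u m \<in> \<rat>"
    using heron_mu_tri_t(1)[OF assms(1,4-6)] assms(2,3) unfolding prod_norm_def by simp
  ultimately show "tri_w m u a b c \<in> \<rat>" unfolding tri_w_eq by simp
  have "a > 0" using trig(1) unfolding hyp_triangle_def by simp
  moreover have "sin (hbeta a b c) > 0" "sin (hgamma a b c) > 0"
    unfolding hbeta_def hgamma_def using hangle_trig(4) trig(1) hyp_triangle_rotate by blast+
  ultimately show "tri_w m u a b c > 0" unfolding tri_w_eq using prod_norm_pos by simp
  have "(tri_w m u a b c)^2
      = (prod_norm (tri_t a b c) u m)^2 * angle_gram (halpha a b c) (hbeta a b c) (hgamma a b c)"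
    unfolding tri_w_eq power_mult_distrib[of "prod_norm _ _ _"] halpha_def hbeta_def hgamma_def
    using sinh_sin_sin_square_eq_angle_gram[OF trig(1)] by simp
  also have "\<dots> = Qpoly m u (tri_t a b c)"
    unfolding angle_gram_def trig(3,5,7) by (rule Qpoly_eq_param_gram)
  finally show "Qpoly m u (tri_t a b c) = (tri_w m u a b c)^2" by simp
qed

lemma inj_on_tri_t_heron_mu: "inj_on (\<lambda>(a, b, c). tri_t a b c) (heron_mu m u)"
proof (rule inj_onI)
  fix X Y assume "X \<in> heron_mu m u" "Y \<in> heron_mu m u"
    and "(\<lambda>(a, b, c). tri_t a b c) X = (\<lambda>(a, b, c). tri_t a b c) Y"
  moreover obtain a b c a' b' c' where X: "X = (a, b, c)" and Y: "Y = (a', b', c')"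
    by (metis prod.exhaust)
  ultimately have H: "(a, b, c) \<in> heron_mu m u" and H': "(a', b', c') \<in> heron_mu m u"
    and t: "tri_t a b c = tri_t a' b' c'" by auto
  note trig = heron_mu_trig[OF H] and trig' = heron_mu_trig[OF H']
  have cosh: "cosh x = angle_cosh_side (halpha x y z) (hbeta x y z) (hgamma x y z)"
    "cosh y = angle_cosh_side (hbeta x y z) (hgamma x y z) (halpha x y z)"
    "cosh z = angle_cosh_side (hgamma x y z) (halpha x y z) (hbeta x y z)"
    if "hyp_triangle x y z" for x y z
    unfolding halpha_def hbeta_def hgamma_def
    using cosh_eq_angle_cosh_side that hyp_triangle_rotate by blast+
  have "cosh a = cosh a'" "cosh b = cosh b'" "cosh c = cosh c'"
    unfolding cosh[OF trig(1)] cosh[OF trig'(1)] angle_cosh_side_def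
    using trig trig' t by simp_all
  moreover have "a > 0" "b > 0" "c > 0" "a' > 0" "b' > 0" "c' > 0"
    using trig(1) trig'(1) unfolding hyp_triangle_def by auto
  ultimately show "X = Y" unfolding X Y by simp
qed

lemma heron_mu_of_param:
  assumes m: "m > 0" "m \<in> \<rat>" and u: "u > 0" "u \<in> \<rat>" and mu: "m * u < 1"
    and t: "t \<in> \<rat>" "condA m u t" and w: "w \<in> \<rat>" "w > 0" "Qpoly m u t = w^2"
  obtains a b c where "(a, b, c) \<in> heron_mu m u" and "tri_t a b c = t"
proof -
  define x y A where "x = 2 * arctan t" and "y = 2 * arctan u" and "A = 2 * arctan m"
  define z where "z = pi - x - y - A"
  have "t > 0" using t(2) unfolding condA_def by simp
  then have pos: "0 < x" "0 < y" "0 < z" "x + y + z < pi"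
    unfolding z_def x_def y_def A_def
    using arctan_sum_lt_pi_half[OF m(1) u(1) mu t(2)] m u by auto
  define a b c where "a = arcosh (angle_cosh_side x y z)" and "b = arcosh (angle_cosh_side y z x)"
    and "c = arcosh (angle_cosh_side z x y)"
  note tri = hyp_triangle_of_angles[OF pos, folded a_def b_def c_def]
  have cx: "cos x = cos_param t" "sin x = sin_param t"
    and cy: "cos y = cos_param u" "sin y = sin_param u"
    and cA: "cos A = cos_param m" "sin A = sin_param m"
    unfolding x_def y_def A_def by (rule cos_sin_two_arctan)+
  have cz: "cos z = cos_rest t u m" "sin z = sin_rest t u m"
    unfolding z_def using cos_sin_rest[OF cx cy cA] by auto
  have "(prod_norm t u m)^2 * angle_gram x y z = w^2"
    unfolding angle_gram_def cx cy cz using Qpoly_eq_param_gram w(3) by simp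
  then have "angle_gram x y z = (w / prod_norm t u m)^2"
    using prod_norm_pos[of t u m] by (simp add: field_simps)
  then have gram: "sqrt (angle_gram x y z) = w / prod_norm t u m"
    using w(2) prod_norm_pos[of t u m] by simp
  have rat: "cos_param t \<in> \<rat>" "sin_param t \<in> \<rat>" "cos_param u \<in> \<rat>" "sin_param u \<in> \<rat>"
    "cos_param m \<in> \<rat>" "sin_param m \<in> \<rat>" "cos_rest t u m \<in> \<rat>" "sin_rest t u m \<in> \<rat>"
    "prod_norm t u m \<in> \<rat>"
    using t(1) u(2) m(2) unfolding cos_param_def sin_param_def cos_rest_def sin_rest_def
      prod_norm_def prod_re_def prod_im_def by simp_all
  have "exp a \<in> \<rat>" "exp b \<in> \<rat>" "exp c \<in> \<rat>"
    unfolding cosh_plus_sinh[symmetric] tri(5-10) gram angle_cosh_side_def cx cy cz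
    using rat w(1) by simp_all
  moreover have angles: "halpha a b c = x" "hbeta a b c = y" "hgamma a b c = z"
    unfolding halpha_def hbeta_def hgamma_def using tri by auto
  moreover have "harea a b c = A" unfolding harea_def angles z_def by simp
  ultimately have "(a, b, c) \<in> heron_mu m u"
    unfolding heron_mu_def heron_def rat_length_def rat_angle_def has_rat_param_def
    using tri(1) rat cx cy cz cA m u unfolding cos_param_def sin_param_def by simp
  moreover have "tri_t a b c = t" unfolding tri_t_def angles x_def by (simp add: tan_arctan)
  ultimately show ?thesis by (rule that)
qed

lemma bij_betw_tri_t_heron_mu:
  assumes "m > 0" "m \<in> \<rat>" "u > 0" "u \<in> \<rat>" "m * u < 1"
  shows "bij_betw (\<lambda>(a, b, c). tri_t a b c) (heron_mu m u)
    {t. t \<in> \<rat> \<and> condA m u t \<and> (\<exists>w\<in>\<rat>. w > 0 \<and> Qpoly m u t = w^2)}"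
proof (rule bij_betw_imageI[OF inj_on_tri_t_heron_mu], intro equalityI subsetI)
  fix t assume "t \<in> (\<lambda>(a, b, c). tri_t a b c) ` heron_mu m u"
  then obtain a b c where H: "(a, b, c) \<in> heron_mu m u" and "t = tri_t a b c" by auto
  then show "t \<in> {t. t \<in> \<rat> \<and> condA m u t \<and> (\<exists>w\<in>\<rat>. w > 0 \<and> Qpoly m u t = w^2)}"
    using heron_mu_tri_t[OF H] heron_mu_tri_w[OF H] assms by auto
next
  fix t assume "t \<in> {t. t \<in> \<rat> \<and> condA m u t \<and> (\<exists>w\<in>\<rat>. w > 0 \<and> Qpoly m u t = w^2)}"
  then obtain w where "t \<in> \<rat>" "condA m u t" "w \<in> \<rat>" "w > 0" "Qpoly m u t = w^2" by auto
  from heron_mu_of_param[OF assms(1-5) this] obtain a b c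
    where "(a, b, c) \<in> heron_mu m u" "tri_t a b c = t" .
  then show "t \<in> (\<lambda>(a, b, c). tri_t a b c) ` heron_mu m u" by force
qed

lemma heron_mu_onC:
  assumes "(a, b, c) \<in> heron_mu m u" "m \<in> \<rat>" "u \<in> \<rat>" "m > 0" "u > 0" "m * u < 1"
  shows "onC m u (tri_t a b c) (tri_w m u a b c)" and "tri_t a b c \<noteq> 0"
  using heron_mu_tri_w(3)[OF assms] heron_mu_trig(2)[OF assms(1)] unfolding onC_def by auto

lemma heron_mu_points_of_E:
  fixes m u :: real
  assumes mu: "m \<in> \<rat>" "u \<in> \<rat>" "m > 0" "u > 0" "m * u < 1"
  defines "F \<equiv> \<lambda>(a, b, c). (phi_x m u (tri_t a b c) (tri_w m u a b c),
                          phi_y m u (tri_t a b c) (tri_w m u a b c))"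
    and "G \<equiv> {(x, y). x \<in> \<rat> \<and> y \<in> \<rat> \<and> onE m u x y \<and> line_val m u x y \<noteq> 0 \<and>
                     condA m u (psi_t m u x y) \<and> psi_w m u x y > 0}"
  shows "inj_on F (heron_mu m u)" and "G \<subseteq> F ` heron_mu m u"
    and "F ` heron_mu m u \<subseteq> G \<union> {Ppt m u}"
proof -
  have nd: "nondegenerate m u" using nondegenerate_real mu(3-5) .
  then have m: "m \<noteq> 0" and k: "kval m u \<noteq> 0" unfolding nondegenerate_def by auto
  show "inj_on F (heron_mu m u)"
  proof (rule inj_onI)
    fix X Y assume X: "X \<in> heron_mu m u" and Y: "Y \<in> heron_mu m u" and "F X = F Y"
    moreover obtain a b c a' b' c' where XY: "X = (a, b, c)" "Y = (a', b', c')"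
      by (metis prod.exhaust)
    ultimately have H: "(a, b, c) \<in> heron_mu m u" "(a', b', c') \<in> heron_mu m u"
      and "phi_x m u (tri_t a b c) (tri_w m u a b c) = phi_x m u (tri_t a' b' c') (tri_w m u a' b' c')"
      and "phi_y m u (tri_t a b c) (tri_w m u a b c) = phi_y m u (tri_t a' b' c') (tri_w m u a' b' c')"
      unfolding F_def by auto
    with phi_determines_t[OF nd heron_mu_onC(1)[OF H(1) mu] heron_mu_onC(1)[OF H(2) mu]
        heron_mu_onC(2)[OF H(1) mu] heron_mu_onC(2)[OF H(2) mu]]
    have "tri_t a b c = tri_t a' b' c'" by blast
    then show "X = Y"
      using inj_onD[OF inj_on_tri_t_heron_mu _ X Y] XY by simp
  qed
  show "G \<subseteq> F ` heron_mu m u"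
  proof (intro subsetI)
    fix p assume "p \<in> G"
    then obtain x y where p: "p = (x, y)" and xy: "x \<in> \<rat>" "y \<in> \<rat>" and E: "onE m u x y"
      and l: "line_val m u x y \<noteq> 0" and A: "condA m u (psi_t m u x y)" and w: "psi_w m u x y > 0"
      unfolding G_def by auto
    define t w where "t = psi_t m u x y" and "w = psi_w m u x y"
    have "t \<noteq> 0" using A unfolding condA_def t_def by simp
    note inverse = phi_psi[OF E l this[unfolded t_def] m k, folded t_def w_def]
    have tw: "t \<in> \<rat>" "w \<in> \<rat>"
      using Rats_phi_psi(2)[OF mu(1,2) xy] unfolding t_def w_def by auto
    have Q: "Qpoly m u t = w^2" using inverse(1) unfolding onC_def by simp
    obtain a b c where H: "(a, b, c) \<in> heron_mu m u" and t: "tri_t a b c = t"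
      using heron_mu_of_param[OF mu(3,1,4,2,5) tw(1) A[folded t_def] tw(2) w[folded w_def] Q] .
    have "(tri_w m u a b c)^2 = w^2" and "tri_w m u a b c > 0"
      using heron_mu_tri_w[OF H mu] Q t by simp_all
    then have "tri_w m u a b c = w" using w[folded w_def] by (simp add: power2_eq_iff_nonneg)
    then have "F (a, b, c) = p" unfolding F_def p using t inverse(2,4) by simp
    then show "p \<in> F ` heron_mu m u" using H by force
  qed
  show "F ` heron_mu m u \<subseteq> G \<union> {Ppt m u}"
  proof (intro subsetI)
    fix p assume "p \<in> F ` heron_mu m u"
    then obtain a b c where H: "(a, b, c) \<in> heron_mu m u" and p: "p = F (a, b, c)" by auto
    define t w where "t = tri_t a b c" and "w = tri_w m u a b c"
    have F: "F (a, b, c) = (phi_x m u t w, phi_y m u t w)" unfolding F_def t_def w_def by simp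
    show "p \<in> G \<union> {Ppt m u}"
    proof (cases "phi_x m u t w = X0 m u")
      case True
      then show ?thesis unfolding p F using phi_eq_Ppt by simp
    next
      case False
      note C = heron_mu_onC[OF H mu, folded t_def w_def]
      note forward = psi_phi[OF C(2) m k False]
      have "t \<in> \<rat>" "w \<in> \<rat>" "condA m u t" "w > 0"
        using heron_mu_tri_t[OF H mu(3-5)] heron_mu_tri_w[OF H mu] unfolding t_def w_def by auto
      then show ?thesis
        unfolding p F G_def using forward onE_phi[OF C] Rats_phi_psi(1)[OF mu(1,2)] by simp
    qed
  qed
qed

theorem theorem1:
  fixes m u :: real
  assumes "m \<in> \<rat>" "u \<in> \<rat>" "m > 0" "u > 0" "m*u < 1"
  shows
  \<comment> \<open>(i) bijection triangles to admissible t, with the explicit w\<close>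
  "bij_betw (\<lambda>(a,b,c). tri_t a b c) (heron_mu m u)
      {t. t \<in> \<rat> \<and> condA m u t \<and> (\<exists>w\<in>\<rat>. w > 0 \<and> Qpoly m u t = w^2)}
   \<and> (\<forall>(a,b,c)\<in>heron_mu m u. tri_w m u a b c \<in> \<rat> \<and> tri_w m u a b c > 0 \<and>
        Qpoly m u (tri_t a b c) = (tri_w m u a b c)^2)
   \<and> \<comment> \<open>(ii) birationality, checked over the algebraic closure C\<close>
   (let cm = complex_of_real m; cu = complex_of_real u in
     (\<forall>t w. onC cm cu t w \<and> t \<noteq> 0 \<and> phi_x cm cu t w \<noteq> X0 cm cu \<longrightarrow>
        onE cm cu (phi_x cm cu t w) (phi_y cm cu t w) \<and>
        line_val cm cu (phi_x cm cu t w) (phi_y cm cu t w) \<noteq> 0 \<and>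
        psi_t cm cu (phi_x cm cu t w) (phi_y cm cu t w) = t \<and>
        psi_w cm cu (phi_x cm cu t w) (phi_y cm cu t w) = w)
   \<and> (\<forall>x y. onE cm cu x y \<and> line_val cm cu x y \<noteq> 0 \<and> psi_t cm cu x y \<noteq> 0 \<longrightarrow>
        onC cm cu (psi_t cm cu x y) (psi_w cm cu x y) \<and>
        phi_x cm cu (psi_t cm cu x y) (psi_w cm cu x y) \<noteq> X0 cm cu \<and>
        phi_x cm cu (psi_t cm cu x y) (psi_w cm cu x y) = x \<and>
        phi_y cm cu (psi_t cm cu x y) (psi_w cm cu x y) = y)
   \<and> finite {(t, w). onC cm cu t w \<and> (t = 0 \<or> phi_x cm cu t w = X0 cm cu)}
   \<and> finite {(x, y). onE cm cu x y \<and> (line_val cm cu x y = 0 \<or> psi_t cm cu x y = 0)})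
   \<and> \<comment> \<open>consequence: correspondence of triangles with rational points of E\<close>
   (let F = (\<lambda>(a,b,c). (phi_x m u (tri_t a b c) (tri_w m u a b c),
                        phi_y m u (tri_t a b c) (tri_w m u a b c)));
        G = {(x, y). x \<in> \<rat> \<and> y \<in> \<rat> \<and> onE m u x y \<and> line_val m u x y \<noteq> 0 \<and>
                     condA m u (psi_t m u x y) \<and> psi_w m u x y > 0}
    in inj_on F (heron_mu m u) \<and> G \<subseteq> F ` heron_mu m u \<and> F ` heron_mu m u \<subseteq> G \<union> {Ppt m u})"
proof -
  have nd: "nondegenerate (complex_of_real m) (complex_of_real u)"
    unfolding nondegenerate_of_real using nondegenerate_real assms(3-5) .
  show ?thesis
    unfolding Let_def
    using bij_betw_tri_t_heron_mu[OF assms(3,1,4,2,5)] heron_mu_tri_w[OF _ assms]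
      birational_C_E[OF nd] heron_mu_points_of_E[OF assms]
    by auto
qed

end
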